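(* Let $D\ge2$ be an integer, $x\ge0$, and set $\lambda^{(0)}_{kj}=\frac{1}{D^2+x}+\delta_{j0}\delta_{k0}\frac{x}{D^2+x}$ for $k,j\in\{0,\dots,D-1\}$. Define for $n\ge0$ the unnormalized quantities $$\lambda^{(n)}_{kj}=\sum_{k'=0}^{D-1}e^{-2\pi i kk'/D}\Big[\sum_{k''=0}^{D-1}e^{-2\pi i k''k'/D}\lambda^{(0)}_{k''j}\Big]^{2^n},$$ and normalize them to sum to 1 over all $k,j$. Then the normalized value is $$\lambda^{(n)}_{00}=\frac{(x+D)^{2^n}+(D-1)x^{2^n}}{D\big[(x+D)^{2^n}+(D-1)D^{2^n}\big]}.$$ In particular, for $x=D$ one has $\lambda^{(n)}_{00}=1/D$ for all $n$, i.e. it is a fixed point of the iteration.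
   Context: This iteration describes the action of $n$ rounds of a bipartite purification protocol for $D$-dimensional systems on a Bell-diagonal state with diagonal elements $\lambda_{kj}$; it is applied with $D=2^{N/2}$ to a maximally depolarized $N$-qubit linear cluster state split into two halves of $N/2$ qubits. *)

theory Defs
  imports Complex_Main
begin

definition lambda0 :: "nat \<Rightarrow> real \<Rightarrow> nat \<Rightarrow> nat \<Rightarrow> complex" where
  "lambda0 D x k j =
     complex_of_real (1 / (real D ^ 2 + x)
       + (if j = 0 \<and> k = 0 then x / (real D ^ 2 + x) else 0))"

definition lambda_unnorm :: "nat \<Rightarrow> real \<Rightarrow> nat \<Rightarrow> nat \<Rightarrow> nat \<Rightarrow> complex" where
  "lambda_unnorm D x n k j =
     (\<Sum>k'<D. exp (- 2 * pi * \<i> * of_nat (k * k') / of_nat D) *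
        (\<Sum>k''<D. exp (- 2 * pi * \<i> * of_nat (k'' * k') / of_nat D) * lambda0 D x k'' j) ^ (2 ^ n))"

definition lambda_norm :: "nat \<Rightarrow> real \<Rightarrow> nat \<Rightarrow> nat \<Rightarrow> nat \<Rightarrow> complex" where
  "lambda_norm D x n k j =
     lambda_unnorm D x n k j / (\<Sum>k1<D. \<Sum>j1<D. lambda_unnorm D x n k1 j1)"

end

(* The inner sums are discrete Fourier transforms of the columns of lambda0. A constant
   column 1/(D^2+x) transforms to the spike D/(D^2+x) at frequency 0, and the extra weight
   x/(D^2+x) at (0,0) adds the constant x/(D^2+x) to the transform of column 0. Hence
   lambda_unnorm at (0,0) is a plain sum over frequencies, while in the total sum the outer
   transform collapses, by orthogonality of the characters, to D times the value at
   frequency 0. The common factor (D^2+x)^(2^n) cancels under normalisation. *)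

theory Submission
  imports Defs "HOL-Analysis.Complex_Transcendental"
begin

lemma sum_exp_roots_unity:
  fixes D m :: nat
  assumes "D > 0"
  shows "(\<Sum>k<D. exp (- 2 * pi * \<i> * of_nat (k * m) / of_nat D)) =
           (if D dvd m then of_nat D else 0)"
proof -
  define w where "w = exp (- 2 * pi * \<i> * of_nat m / of_nat D)"
  have summand_eq: "exp (- 2 * pi * \<i> * of_nat (k * m) / of_nat D) = w ^ k" for k
    unfolding w_def exp_of_nat_mult [symmetric] by (simp add: algebra_simps)
  have w_inverse: "w = inverse (exp (2 * pi * \<i> * of_nat m / of_nat D))"
    unfolding w_def by (simp add: exp_minus [symmetric])
  have w_eq_1: "w = 1 \<longleftrightarrow> D dvd m"
    using complex_root_unity_eq_1 [of D m] assms unfolding w_inverse by simp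
  have "w ^ D = 1"
    using complex_root_unity [of D m] assms unfolding w_inverse by (simp add: power_inverse)
  then show ?thesis
    unfolding summand_eq using w_eq_1 by (simp add: sum_gp_strict)
qed

lemma sum_sum_exp_roots_unity:
  fixes D :: nat and f :: "nat \<Rightarrow> complex"
  assumes "D > 0"
  shows "(\<Sum>k<D. \<Sum>k'<D. exp (- 2 * pi * \<i> * of_nat (k * k') / of_nat D) * f k') =
           of_nat D * f 0"
proof -
  have "(\<Sum>k<D. \<Sum>k'<D. exp (- 2 * pi * \<i> * of_nat (k * k') / of_nat D) * f k')
      = (\<Sum>k'<D. (\<Sum>k<D. exp (- 2 * pi * \<i> * of_nat (k * k') / of_nat D)) * f k')"
    unfolding sum_distrib_right by (rule sum.swap)
  also have "\<dots> = (\<Sum>k'<D. if k' = 0 then of_nat D * f 0 else 0)"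
    by (intro sum.cong refl) (subst sum_exp_roots_unity [OF assms], auto simp: nat_dvd_not_less)
  also have "\<dots> = of_nat D * f 0"
    using assms by simp
  finally show ?thesis .
qed

lemma sum_lessThan_if_eq_0:
  fixes a b :: "'a::ring_1"
  assumes "D > 0"
  shows "(\<Sum>k<D. if k = 0 then a else b) = a + (of_nat D - 1) * b"
proof -
  obtain d where D: "D = Suc d"
    using assms by (cases D) auto
  show ?thesis
    unfolding D sum.lessThan_Suc_shift by simp
qed

lemma lambda0_column_transform:
  fixes D m j :: nat and x :: real
  assumes "m < D"
  shows "(\<Sum>k<D. exp (- 2 * pi * \<i> * of_nat (k * m) / of_nat D) * lambda0 D x k j) =
           of_real (((if m = 0 then real D else 0) + (if j = 0 then x else 0)) / (real D ^ 2 + x))"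
proof -
  define s where "s = real D ^ 2 + x"
  define e where "e k = exp (- 2 * pi * \<i> * of_nat (k * m) / of_nat D)" for k
  have "e 0 = 1"
    by (simp add: e_def)
  then have summand_split: "e k * lambda0 D x k j =
      e k * of_real (1 / s) + (if k = 0 then of_real ((if j = 0 then x else 0) / s) else 0)" for k
    by (simp add: lambda0_def s_def distrib_left)
  have "D dvd m \<longleftrightarrow> m = 0"
    using assms nat_dvd_not_less by auto
  then have roots_sum: "(\<Sum>k<D. e k) = (if m = 0 then of_nat D else 0)"
    using sum_exp_roots_unity [of D m] assms unfolding e_def by simp
  have "(\<Sum>k<D. e k * lambda0 D x k j)
      = (\<Sum>k<D. e k) * of_real (1 / s) + of_real ((if j = 0 then x else 0) / s)"
    using assms by (simp add: summand_split sum.distrib sum_divide_distrib)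
  also have "\<dots> = of_real (((if m = 0 then real D else 0) + (if j = 0 then x else 0)) / s)"
    unfolding roots_sum by (simp add: add_divide_distrib)
  finally show ?thesis
    unfolding s_def e_def .
qed

lemma lambda_unnorm_0_0:
  fixes D n :: nat and x :: real
  assumes "D > 0"
  shows "lambda_unnorm D x n 0 0 =
           of_real (((x + real D) ^ 2 ^ n + (real D - 1) * x ^ 2 ^ n) / (real D ^ 2 + x) ^ 2 ^ n)"
proof -
  define s where "s = real D ^ 2 + x"
  have "lambda_unnorm D x n 0 0 =
      (\<Sum>k'<D. of_real (if k' = 0 then ((x + real D) / s) ^ 2 ^ n else (x / s) ^ 2 ^ n))"
    unfolding lambda_unnorm_def s_def
    by (intro sum.cong refl) (subst lambda0_column_transform, auto simp: add.commute)
  also have "\<dots> = of_real (((x + real D) / s) ^ 2 ^ n + (real D - 1) * (x / s) ^ 2 ^ n)"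
    unfolding of_real_sum [symmetric] sum_lessThan_if_eq_0 [OF assms] by simp
  also have "\<dots> =
      of_real (((x + real D) ^ 2 ^ n + (real D - 1) * x ^ 2 ^ n) / s ^ 2 ^ n)"
    by (rule arg_cong [where f = of_real])
      (simp only: power_divide times_divide_eq_right add_divide_distrib [symmetric])
  finally show ?thesis
    unfolding s_def .
qed

lemma sum_lambda_unnorm:
  fixes D n :: nat and x :: real
  assumes "D > 0"
  shows "(\<Sum>k<D. \<Sum>j<D. lambda_unnorm D x n k j) =
           of_real (real D * ((x + real D) ^ 2 ^ n + (real D - 1) * real D ^ 2 ^ n)
                    / (real D ^ 2 + x) ^ 2 ^ n)"
proof -
  define s where "s = real D ^ 2 + x"
  have column_sum: "(\<Sum>k<D. lambda_unnorm D x n k j) =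
      of_real (real D * (if j = 0 then ((x + real D) / s) ^ 2 ^ n else (real D / s) ^ 2 ^ n))"
    for j
  proof -
    have "(\<Sum>k<D. lambda_unnorm D x n k j) = of_nat D *
        (\<Sum>k''<D. exp (- 2 * pi * \<i> * of_nat (k'' * 0) / of_nat D) * lambda0 D x k'' j)
          ^ 2 ^ n"
      unfolding lambda_unnorm_def by (rule sum_sum_exp_roots_unity [OF assms])
    then show ?thesis
      using assms by (simp only: lambda0_column_transform s_def) (simp add: add.commute)
  qed
  have "(\<Sum>k<D. \<Sum>j<D. lambda_unnorm D x n k j) =
      (\<Sum>j<D. \<Sum>k<D. lambda_unnorm D x n k j)"
    by (rule sum.swap)
  also have "\<dots> = of_real (real D *
      (\<Sum>j<D. if j = 0 then ((x + real D) / s) ^ 2 ^ n else (real D / s) ^ 2 ^ n))"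
    unfolding column_sum of_real_sum [symmetric] sum_distrib_left ..
  also have "\<dots> =
      of_real (real D * (((x + real D) / s) ^ 2 ^ n + (real D - 1) * (real D / s) ^ 2 ^ n))"
    unfolding sum_lessThan_if_eq_0 [OF assms] by simp
  also have "\<dots> =
      of_real (real D * ((x + real D) ^ 2 ^ n + (real D - 1) * real D ^ 2 ^ n) / s ^ 2 ^ n)"
    by (rule arg_cong [where f = of_real])
      (simp only: power_divide times_divide_eq_right add_divide_distrib [symmetric])
  finally show ?thesis
    unfolding s_def .
qed

lemma lambda_norm_0_0:
  fixes D n :: nat and x :: real
  assumes "D > 0" and "x \<ge> 0"
  shows "lambda_norm D x n 0 0 =
           of_real (((x + real D) ^ 2 ^ n + (real D - 1) * x ^ 2 ^ n) /
             (real D * ((x + real D) ^ 2 ^ n + (real D - 1) * real D ^ 2 ^ n)))"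
proof -
  have "real D ^ 2 + x > 0"
    using assms by (simp add: add_pos_nonneg)
  then show ?thesis
    unfolding lambda_norm_def lambda_unnorm_0_0 [OF assms(1)] sum_lambda_unnorm [OF assms(1)]
      of_real_divide [symmetric]
    by simp
qed

lemma lambda_norm_0_0_fixed_point:
  fixes D n :: nat
  assumes "D > 0"
  shows "lambda_norm D (real D) n 0 0 = of_real (1 / real D)"
proof -
  have "(real D + real D) ^ 2 ^ n + (real D - 1) * real D ^ 2 ^ n > 0"
    using assms by (intro add_pos_nonneg) auto
  then show ?thesis
    unfolding lambda_norm_0_0 [OF assms of_nat_0_le_iff] by simp
qed

theorem mainTheorem10:
  fixes D :: nat and x :: real and n :: nat
  assumes "D \<ge> 2" and "x \<ge> 0"
  shows "lambda_norm D x n 0 0 =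
           complex_of_real (((x + real D) ^ (2 ^ n) + (real D - 1) * x ^ (2 ^ n)) /
             (real D * ((x + real D) ^ (2 ^ n) + (real D - 1) * real D ^ (2 ^ n))))
    \<and> lambda_norm D (real D) n 0 0 = complex_of_real (1 / real D)"
proof -
  have "D > 0"
    using assms(1) by simp
  then show ?thesis
    using lambda_norm_0_0 lambda_norm_0_0_fixed_point assms(2) by blast
qed

end
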